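(* For every subset $A \subseteq \overline{\mathbb{Q}}$ there is a transcendental entire function $f$ such that $S_{f^{(s)}} = A$ for every integer $s \geq 0$.
   Context: $\overline{\mathbb{Q}}$ denotes the set of algebraic numbers in $\mathbb{C}$. For an entire function $g$, its exceptional set is $S_g = \{\alpha \in \overline{\mathbb{Q}} : g(\alpha) \in \overline{\mathbb{Q}}\}$. A transcendental entire function is an entire function $\mathbb{C}\to\mathbb{C}$ that is not a polynomial. $f^{(s)}$ denotes the $s$-th derivative of $f$, with $f^{(0)}=f$. *)

theory Defs
  imports "HOL-Analysis.Analysis" "HOL-Computational_Algebra.Polynomial"
begin

definition alg_numbers :: "complex set" where
  "alg_numbers = {z. algebraic z}"

definition exceptional_set :: "(complex \<Rightarrow> complex) \<Rightarrow> complex set" where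
  "exceptional_set g = {\<alpha> \<in> alg_numbers. g \<alpha> \<in> alg_numbers}"

definition transcendental_entire :: "(complex \<Rightarrow> complex) \<Rightarrow> bool" where
  "transcendental_entire f \<longleftrightarrow> f holomorphic_on UNIV \<and> \<not> (\<exists>p. \<forall>z. f z = poly p z)"

end

theory Submission
  imports Defs
begin

(*
  Given a set A of algebraic numbers, f is built as a Hermite-type interpolation
  series  f(z) = sum_j c_j P_j(z),  where j |-> (a_j, s_j) enumerates all pairs of an
  algebraic number and a derivative order, each pair exactly once.  The polynomial
    P_j = (z - a_j)^(s_j) * prod {(z - a_i)^(s_i + 1) | i < j, a_i ~= a_j}
  satisfies  P_j^(s_i)(a_i) = 0  for i < j  (when a_i = a_j because then s_i < s_j)
  and  P_j^(s_j)(a_j) ~= 0.  Hence f^(s_j)(a_j) depends only on c_0, ..., c_j and is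
  affine in c_j, so c_j can be chosen recursively, arbitrarily small, such that this
  value is a nonzero algebraic number if a_j is in A and a transcendental number
  otherwise; this uses that both kinds of numbers are dense in the plane.  Smallness
  of c_j makes the series and all its termwise derivatives converge locally
  uniformly, so f is entire with  f^(s) = sum_j c_j P_j^(s).  Finally f is not a
  polynomial, because none of its derivatives vanishes at 0.
*)

section \<open>Iterated derivatives of polynomials\<close>

lemma higher_pderiv_Suc: "(pderiv ^^ Suc s) p = (pderiv ^^ s) (pderiv p)"
  by (simp add: funpow_Suc_right del: funpow.simps)

lemma pderiv_dvd_power:
  fixes q p :: "'a::idom poly"
  assumes "q ^ Suc m dvd p"
  shows "q ^ m dvd pderiv p"
proof -
  obtain r where r: "p = q ^ Suc m * r" using assms by (auto simp: dvd_def)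
  have "pderiv p = q ^ m * (smult (of_nat (Suc m)) (pderiv q * r) + q * pderiv r)"
    unfolding r pderiv_mult pderiv_power_Suc by (simp add: algebra_simps)
  then show ?thesis by simp
qed

lemma higher_pderiv_root:
  fixes p :: "'a::idom poly"
  assumes "[:-a, 1:] ^ m dvd p" "t < m"
  shows "poly ((pderiv ^^ t) p) a = 0"
  using assms
proof (induction t arbitrary: p m)
  case 0
  then have "[:-a, 1:] dvd p"
    by (metis dvd_power dvd_trans)
  then show ?case by (simp add: poly_eq_0_iff_dvd)
next
  case (Suc t)
  then obtain m' where m: "m = Suc m'" by (cases m) auto
  have "[:-a, 1:] ^ m' dvd pderiv p"
    using Suc.prems m pderiv_dvd_power by blast
  then show ?case
    using Suc m by (simp only: higher_pderiv_Suc)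
qed

lemma higher_pderiv_power_mult:
  fixes r :: "'a::{idom,ring_char_0} poly"
  shows "\<exists>u. (pderiv ^^ s) ([:-a, 1:] ^ s * r) = smult (fact s) r + [:-a, 1:] * u"
proof (induction s arbitrary: r)
  case 0
  show ?case by (intro exI[of _ 0]) simp
next
  case (Suc s)
  define q where "q = [:-a, 1:]"
  have "pderiv q = 1" by (simp add: q_def pderiv_pCons)
  then have split: "pderiv (q ^ Suc s * r) =
      smult (of_nat (Suc s)) (q ^ s * r) + q ^ s * (q * pderiv r)"
    unfolding pderiv_mult pderiv_power_Suc by (simp add: algebra_simps)
  obtain u1 where u1: "(pderiv ^^ s) (q ^ s * r) = smult (fact s) r + q * u1"
    using Suc q_def by blast
  obtain u2 where u2:
    "(pderiv ^^ s) (q ^ s * (q * pderiv r)) = smult (fact s) (q * pderiv r) + q * u2"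
    using Suc q_def by blast
  have "(pderiv ^^ Suc s) (q ^ Suc s * r) =
      smult (of_nat (Suc s)) (smult (fact s) r + q * u1) + (smult (fact s) (q * pderiv r) + q * u2)"
    by (simp only: higher_pderiv_Suc split higher_pderiv_add higher_pderiv_smult u1 u2)
  also have "\<dots> = smult (fact (Suc s)) r
      + q * (smult (of_nat (Suc s)) u1 + smult (fact s) (pderiv r) + u2)"
    by (simp add: algebra_simps smult_add_right)
  finally show ?case unfolding q_def by blast
qed

corollary poly_higher_pderiv_power_mult:
  fixes r :: "'a::{idom,ring_char_0} poly"
  shows "poly ((pderiv ^^ s) ([:-a, 1:] ^ s * r)) a = fact s * poly r a"
  using higher_pderiv_power_mult[of s a r] by auto

lemma higher_deriv_poly:
  "(deriv ^^ s) (poly p) = poly ((pderiv ^^ s) (p :: 'a::real_normed_field poly))"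
proof (induction s)
  case (Suc s)
  have "deriv (poly q) = poly (pderiv q)" for q :: "'a poly"
    by (rule ext, rule DERIV_imp_deriv, rule poly_DERIV)
  then show ?case using Suc by simp
qed simp

lemma higher_pderiv_beyond_degree:
  "(pderiv ^^ Suc (degree p)) p = (0 :: 'a::{idom,ring_char_0} poly)"
proof -
  have "degree ((pderiv ^^ degree p) p) = 0" by (simp add: degree_higher_pderiv)
  then show ?thesis by (simp add: pderiv_eq_0_iff)
qed

definition disc_bound :: "'a::real_normed_field poly \<Rightarrow> real \<Rightarrow> real" where
  "disc_bound p R = (\<Sum>i\<le>degree p. norm (coeff p i) * R ^ i)"

lemma disc_bound_le:
  assumes "norm z \<le> R"
  shows "norm (poly p z) \<le> disc_bound p R"
proof -
  have "norm (poly p z) \<le> (\<Sum>i\<le>degree p. norm (coeff p i * z ^ i))"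
    unfolding poly_altdef by (rule norm_sum)
  also have "\<dots> \<le> disc_bound p R"
    unfolding disc_bound_def
    by (intro sum_mono) (auto simp: norm_mult norm_power intro!: mult_left_mono power_mono assms)
  finally show ?thesis .
qed

lemma disc_bound_nonneg: "R \<ge> 0 \<Longrightarrow> disc_bound p R \<ge> 0"
  unfolding disc_bound_def by (intro sum_nonneg) auto

section \<open>Algebraic and transcendental numbers\<close>

lemma integer_poly_as_Poly:
  fixes p :: "'a::ring_1 poly"
  assumes "\<And>i. coeff p i \<in> \<int>"
  shows "\<exists>ys. p = Poly (map of_int ys)"
proof -
  have "\<forall>c\<in>set (coeffs p). \<exists>n. c = of_int n"
  proof
    fix c assume "c \<in> set (coeffs p)"
    then have "c \<in> range (coeff p)" by (simp add: range_coeff)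
    then show "\<exists>n. c = of_int n" using assms by (auto elim!: Ints_cases)
  qed
  then obtain ys where "coeffs p = map of_int ys" by (metis ex_map_conv)
  then show ?thesis by (metis Poly_coeffs)
qed

text \<open>There are only countably many algebraic numbers: each is a root of one of the
  countably many nonzero integer polynomials.\<close>
lemma countable_algebraic: "countable {x :: 'a::field_char_0. algebraic x}"
proof -
  define P :: "'a poly set" where "P = range (\<lambda>ys. Poly (map of_int ys))"
  have "{x. algebraic x} \<subseteq> (\<Union>p\<in>P - {0}. {x. poly p x = 0})"
  proof
    fix x :: 'a assume "x \<in> {x. algebraic x}"
    then obtain p :: "'a poly" where p: "\<And>i. coeff p i \<in> \<int>" "p \<noteq> 0" "poly p x = 0"
      unfolding algebraic_def by blast
    then have "p \<in> P" unfolding P_def using integer_poly_as_Poly by blast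
    with p show "x \<in> (\<Union>p\<in>P - {0}. {x. poly p x = 0})" by blast
  qed
  moreover have "countable (\<Union>p\<in>P - {0}. {x. poly p x = 0})"
  proof (rule countable_UN)
    show "countable (P - {0})" unfolding P_def by simp
    fix p assume "p \<in> P - {0}"
    then show "countable {x. poly p x = 0}" by (simp add: countable_finite poly_roots_finite)
  qed
  ultimately show ?thesis by (rule countable_subset)
qed

lemma infinite_algebraic: "infinite {x :: 'a::field_char_0. algebraic x}"
proof
  assume "finite {x :: 'a. algebraic x}"
  moreover have "range (of_nat :: nat \<Rightarrow> 'a) \<subseteq> {x. algebraic x}"
    by (auto intro: rat_imp_algebraic)
  ultimately have "finite (range (of_nat :: nat \<Rightarrow> 'a))" by (rule finite_subset[rotated])
  then show False using finite_imageD inj_of_nat by blast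
qed

text \<open>Gaussian rationals are algebraic: \<open>a + bi\<close> is a root of \<open>z\<^sup>2 - 2az + a\<^sup>2 + b\<^sup>2\<close>.\<close>
lemma algebraic_Complex_Rats:
  assumes "a \<in> \<rat>" "b \<in> \<rat>"
  shows "algebraic (Complex a b)"
proof -
  define p :: "complex poly" where "p = [:of_real (a\<^sup>2 + b\<^sup>2), of_real (-2 * a), 1:]"
  have ab: "of_real a \<in> (\<rat> :: complex set)" "of_real b \<in> (\<rat> :: complex set)"
    using assms by (auto elim!: Rats_cases)
  have "coeff p i \<in> \<rat>" for i
  proof -
    have "of_real (a\<^sup>2 + b\<^sup>2) = (of_real a)\<^sup>2 + (of_real b :: complex)\<^sup>2"
      and "of_real (-2 * a) = -2 * (of_real a :: complex)" by simp_all
    then show ?thesis using ab unfolding p_def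
      by (cases i; cases "i - 1"; simp add: coeff_pCons split: nat.splits)
  qed
  moreover have "p \<noteq> 0" by (simp add: p_def)
  moreover have "poly p (Complex a b) = 0"
    by (simp add: p_def complex_eq_iff power2_eq_square algebra_simps)
  ultimately show ?thesis by (intro algebraicI') auto
qed

lemma dense_nonzero_algebraic:
  fixes w :: complex
  assumes "r > 0"
  shows "\<exists>\<beta>. algebraic \<beta> \<and> \<beta> \<noteq> 0 \<and> dist \<beta> w < r"
proof -
  obtain a1 where a1: "a1 \<in> \<rat>" "Re w < a1" "a1 < Re w + r/2"
    using Rats_dense_in_real[of "Re w" "Re w + r/2"] assms by auto
  obtain a2 where a2: "a2 \<in> \<rat>" "a1 < a2" "a2 < Re w + r/2"
    using Rats_dense_in_real[of a1 "Re w + r/2"] a1 by auto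
  obtain b where b: "b \<in> \<rat>" "Im w < b" "b < Im w + r/2"
    using Rats_dense_in_real[of "Im w" "Im w + r/2"] assms by auto
  text \<open>Of the two rationals \<open>a1 < a2\<close> at least one is nonzero.\<close>
  define a where "a = (if a1 = 0 then a2 else a1)"
  have a: "a \<in> \<rat>" "a \<noteq> 0" "Re w < a" "a < Re w + r/2"
    using a1 a2 by (auto simp: a_def)
  have "dist (Complex a b) w \<le> \<bar>Re (Complex a b - w)\<bar> + \<bar>Im (Complex a b - w)\<bar>"
    unfolding dist_norm by (rule cmod_le)
  also have "\<dots> < r" using a b by simp
  finally show ?thesis
    using algebraic_Complex_Rats[OF a(1) b(1)] a(2) by (auto simp: complex_eq_iff)
qed

text \<open>Transcendental numbers are dense, since the algebraic ones are countable.\<close>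
lemma dense_transcendental:
  fixes w :: complex
  assumes "r > 0"
  shows "\<exists>\<beta>. \<not> algebraic \<beta> \<and> dist \<beta> w < r"
  using ball_minus_countable_nonempty[OF countable_algebraic assms, of w]
  by (auto simp: dist_commute)

lemma small_affine_hit:
  fixes S d :: "'a::real_normed_field"
  assumes dense: "\<And>w r. r > 0 \<Longrightarrow> \<exists>\<beta>\<in>T. dist \<beta> w < r"
    and "e > 0" "d \<noteq> 0"
  shows "\<exists>x. norm x \<le> e \<and> S + x * d \<in> T"
proof -
  have "e * norm d > 0" using assms by simp
  then obtain \<beta> where \<beta>: "\<beta> \<in> T" "dist \<beta> S < e * norm d"
    using dense by blast
  define x where "x = (\<beta> - S) / d"
  have "S + x * d = \<beta>" using assms by (simp add: x_def)
  moreover have "norm x \<le> e"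
    using \<beta> assms by (simp add: x_def norm_divide dist_norm pos_divide_le_eq)
  ultimately show ?thesis using \<beta> by metis
qed

section \<open>Termwise differentiation of polynomial series\<close>

lemma poly_series_has_field_derivative:
  fixes c :: "nat \<Rightarrow> 'a::{real_normed_field,banach}" and p :: "nat \<Rightarrow> 'a poly"
  assumes bound: "\<And>s R. \<forall>\<^sub>F n in sequentially.
      \<forall>z\<in>cball 0 R. norm (c n * poly ((pderiv ^^ s) (p n)) z) \<le> M n"
    and "summable M"
  shows "((\<lambda>z. \<Sum>n. c n * poly ((pderiv ^^ s) (p n)) z) has_field_derivative
           (\<Sum>n. c n * poly ((pderiv ^^ Suc s) (p n)) z)) (at z)"
proof -
  define S where "S = cball (0::'a) (norm z + 1)"
  have z: "z \<in> S" "z \<in> interior S" by (auto simp: S_def)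
  have "uniform_limit S (\<lambda>n x. \<Sum>i<n. c i * poly ((pderiv ^^ Suc s) (p i)) x)
      (\<lambda>x. \<Sum>i. c i * poly ((pderiv ^^ Suc s) (p i)) x) sequentially"
    unfolding S_def by (rule Weierstrass_m_test_ev[OF bound \<open>summable M\<close>])
  then have unif: "uniformly_convergent_on S
      (\<lambda>n x. \<Sum>i<n. c i * poly ((pderiv ^^ Suc s) (p i)) x)"
    unfolding uniformly_convergent_on_def by blast
  have "\<forall>\<^sub>F n in sequentially. norm (c n * poly ((pderiv ^^ s) (p n)) z) \<le> M n"
    using bound[where s = s and R = "norm z"] by (rule eventually_mono) simp
  then have summ: "summable (\<lambda>n. c n * poly ((pderiv ^^ s) (p n)) z)"
    using \<open>summable M\<close> by (rule summable_comparison_test_ev)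
  have deriv: "((\<lambda>x. c n * poly ((pderiv ^^ s) (p n)) x) has_field_derivative
      c n * poly ((pderiv ^^ Suc s) (p n)) x) (at x within S)" for n x
    unfolding funpow.simps(2) o_apply
    by (rule DERIV_cmult, rule has_field_derivative_at_within, rule poly_DERIV)
  show ?thesis
    by (rule has_field_derivative_series'(2)[OF _ deriv unif z(1) summ z(2)]) (simp add: S_def)
qed

corollary higher_deriv_poly_series:
  fixes c :: "nat \<Rightarrow> 'a::{real_normed_field,banach}" and p :: "nat \<Rightarrow> 'a poly"
  assumes "\<And>s R. \<forall>\<^sub>F n in sequentially.
      \<forall>z\<in>cball 0 R. norm (c n * poly ((pderiv ^^ s) (p n)) z) \<le> M n"
    and "summable M"
  shows "(deriv ^^ s) (\<lambda>z. \<Sum>n. c n * poly (p n) z) = (\<lambda>z. \<Sum>n. c n * poly ((pderiv ^^ s) (p n)) z)"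
proof (induction s)
  case (Suc s)
  then show ?case
    using poly_series_has_field_derivative[OF assms] by (auto intro!: ext DERIV_imp_deriv)
qed simp

section \<open>The enumeration of pairs (point, derivative order)\<close>

definition alg_enum :: "nat \<Rightarrow> complex" where
  "alg_enum = from_nat_into alg_numbers"

lemma alg_enum_inj: "alg_enum m = alg_enum n \<longleftrightarrow> m = n"
  unfolding alg_enum_def alg_numbers_def
  using countable_algebraic[where 'a = complex] infinite_algebraic[where 'a = complex] by simp

text \<open>Index \<open>j\<close> stands for the condition on the derivative of order \<open>deriv_order j\<close> at \<open>node j\<close>.\<close>
definition node :: "nat \<Rightarrow> complex" where
  "node j = alg_enum (snd (prod_decode j))"

definition deriv_order :: "nat \<Rightarrow> nat" where
  "deriv_order j = fst (prod_decode j)"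

lemma node_deriv_order_surj:
  assumes "z \<in> alg_numbers"
  shows "\<exists>j. node j = z \<and> deriv_order j = s"
proof -
  obtain k where "alg_enum k = z"
    using from_nat_into_surj[OF _ assms] countable_algebraic
    unfolding alg_enum_def alg_numbers_def by auto
  then show ?thesis
    by (intro exI[of _ "prod_encode (s, k)"]) (simp add: node_def deriv_order_def)
qed

lemma triangle_mono: "a \<le> b \<Longrightarrow> triangle a \<le> triangle b"
  by (induction b) (auto simp: le_Suc_eq)

lemma prod_encode_mono_fst:
  assumes "m \<le> n"
  shows "prod_encode (m, k) \<le> prod_encode (n, k)"
  using assms add_mono[OF triangle_mono[of "m + k" "n + k"] assms] by (simp add: prod_encode_def)

lemma deriv_order_less_at_same_node:
  assumes "j < i" "node j = node i"
  shows "deriv_order j < deriv_order i"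
proof (rule ccontr)
  assume "\<not> deriv_order j < deriv_order i"
  have "snd (prod_decode j) = snd (prod_decode i)"
    using assms(2) by (simp add: node_def alg_enum_inj)
  then have "prod_encode (prod_decode i) \<le> prod_encode (prod_decode j)"
    using \<open>\<not> deriv_order j < deriv_order i\<close> prod_encode_mono_fst[of "deriv_order i" "deriv_order j"]
    by (metis deriv_order_def not_less prod.collapse)
  then show False using assms(1) by simp
qed

section \<open>The basis polynomials\<close>

definition basis_poly :: "nat \<Rightarrow> complex poly" where
  "basis_poly j = [:- node j, 1:] ^ deriv_order j *
     (\<Prod>i\<in>{i. i < j \<and> node i \<noteq> node j}. [:- node i, 1:] ^ Suc (deriv_order i))"

lemma basis_poly_vanishes:
  assumes "j < i"
  shows "poly ((pderiv ^^ deriv_order j) (basis_poly i)) (node j) = 0"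
proof (cases "node j = node i")
  case True
  have "[:- node i, 1:] ^ deriv_order i dvd basis_poly i" by (simp add: basis_poly_def)
  then show ?thesis
    using True deriv_order_less_at_same_node[OF assms True] higher_pderiv_root by metis
next
  case False
  then have "[:- node j, 1:] ^ Suc (deriv_order j) dvd
      (\<Prod>i'\<in>{i'. i' < i \<and> node i' \<noteq> node i}. [:- node i', 1:] ^ Suc (deriv_order i'))"
    using assms by (intro dvd_prodI) auto
  then have "[:- node j, 1:] ^ Suc (deriv_order j) dvd basis_poly i"
    unfolding basis_poly_def by (rule dvd_mult)
  then show ?thesis using higher_pderiv_root by blast
qed

text \<open>The coefficient of \<open>c\<^sub>j\<close> in the value at index \<open>j\<close>; it is nonzero by the
  Leibniz rule modulo \<open>z - node j\<close>, as the other factors of \<open>P\<^sub>j\<close> do not vanish there.\<close>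
definition lead_value :: "nat \<Rightarrow> complex" where
  "lead_value j = poly ((pderiv ^^ deriv_order j) (basis_poly j)) (node j)"

lemma lead_value_nonzero: "lead_value j \<noteq> 0"
proof -
  have "lead_value j = fact (deriv_order j) *
      poly (\<Prod>i\<in>{i. i < j \<and> node i \<noteq> node j}. [:- node i, 1:] ^ Suc (deriv_order i)) (node j)"
    unfolding lead_value_def basis_poly_def by (rule poly_higher_pderiv_power_mult)
  also have "\<dots> = fact (deriv_order j) *
      (\<Prod>i\<in>{i. i < j \<and> node i \<noteq> node j}. (node j - node i) ^ Suc (deriv_order i))"
    by (simp add: poly_prod del: power_Suc)
  finally show ?thesis by auto
qed

definition target :: "complex set \<Rightarrow> complex \<Rightarrow> complex set" where
  "target A \<alpha> = (if \<alpha> \<in> A then {\<beta>. algebraic \<beta> \<and> \<beta> \<noteq> 0} else {\<beta>. \<not> algebraic \<beta>})"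

lemma target_dense: "r > 0 \<Longrightarrow> \<exists>\<beta>\<in>target A \<alpha>. dist \<beta> w < r"
  using dense_nonzero_algebraic dense_transcendental by (simp add: target_def)

lemma target_algebraic_iff: "\<beta> \<in> target A \<alpha> \<Longrightarrow> algebraic \<beta> \<longleftrightarrow> \<alpha> \<in> A"
  by (simp add: target_def split: if_splits)

lemma zero_notin_target: "0 \<notin> target A \<alpha>"
  by (simp add: target_def)

definition basis_bound :: "nat \<Rightarrow> real" where
  "basis_bound j = (\<Sum>t\<le>j. disc_bound ((pderiv ^^ t) (basis_poly j)) (real j))"

definition coeff_radius :: "nat \<Rightarrow> real" where
  "coeff_radius j = 1 / (2 ^ j * (1 + basis_bound j))"

lemma basis_bound_nonneg: "basis_bound j \<ge> 0"
  unfolding basis_bound_def by (intro sum_nonneg disc_bound_nonneg) auto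

lemma coeff_radius_pos: "coeff_radius j > 0"
  using basis_bound_nonneg[of j] by (simp add: coeff_radius_def)

definition partial_value :: "nat \<Rightarrow> (nat \<Rightarrow> complex) \<Rightarrow> complex" where
  "partial_value j c = (\<Sum>i<j. c i * poly ((pderiv ^^ deriv_order j) (basis_poly i)) (node j))"

definition admissible :: "complex set \<Rightarrow> nat \<Rightarrow> (nat \<Rightarrow> complex) \<Rightarrow> complex \<Rightarrow> bool" where
  "admissible A j c x \<longleftrightarrow> norm x \<le> coeff_radius j \<and>
     partial_value j c + x * lead_value j \<in> target A (node j)"

fun coeff_list :: "complex set \<Rightarrow> nat \<Rightarrow> complex list" where
  "coeff_list A 0 = []"
| "coeff_list A (Suc j) = coeff_list A j @ [SOME x. admissible A j (\<lambda>i. coeff_list A j ! i) x]"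

definition coef :: "complex set \<Rightarrow> nat \<Rightarrow> complex" where
  "coef A j = coeff_list A (Suc j) ! j"

lemma length_coeff_list: "length (coeff_list A j) = j"
  by (induction j) auto

lemma coef_eq_choice: "coef A j = (SOME x. admissible A j (\<lambda>i. coeff_list A j ! i) x)"
  by (simp add: coef_def nth_append length_coeff_list)

lemma coeff_list_eq: "coeff_list A j = map (coef A) [0..<j]"
  by (induction j) (simp_all add: coef_eq_choice)

text \<open>Each \<open>c\<^sub>j\<close> is admissible: the choice is possible because targets are dense
  and the coefficient \<open>lead_value j\<close> of \<open>c\<^sub>j\<close> is nonzero.\<close>
lemma coef_admissible: "admissible A j (coef A) (coef A j)"
proof -
  have "partial_value j (\<lambda>i. coeff_list A j ! i) = partial_value j (coef A)"
    unfolding partial_value_def by (intro sum.cong) (auto simp: coeff_list_eq)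
  moreover have "\<exists>x. admissible A j (coef A) x"
    using small_affine_hit[OF target_dense coeff_radius_pos lead_value_nonzero]
    unfolding admissible_def by blast
  ultimately show ?thesis
    using someI_ex[of "admissible A j (\<lambda>i. coeff_list A j ! i)"]
    by (simp add: admissible_def coef_eq_choice)
qed

lemma coef_term_bound:
  assumes "s \<le> n" "norm z \<le> real n"
  shows "norm (coef A n * poly ((pderiv ^^ s) (basis_poly n)) z) \<le> (1/2) ^ n"
proof -
  have "norm (poly ((pderiv ^^ s) (basis_poly n)) z) \<le>
      disc_bound ((pderiv ^^ s) (basis_poly n)) (real n)"
    by (rule disc_bound_le[OF assms(2)])
  also have "\<dots> \<le> basis_bound n"
    unfolding basis_bound_def using assms
    by (intro member_le_sum[where f = "\<lambda>t. disc_bound ((pderiv ^^ t) (basis_poly n)) (real n)"])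
       (auto intro: disc_bound_nonneg)
  finally have "norm (coef A n * poly ((pderiv ^^ s) (basis_poly n)) z) \<le>
      coeff_radius n * basis_bound n"
    unfolding norm_mult using coef_admissible[of A n] coeff_radius_pos[of n]
    by (intro mult_mono) (auto simp: admissible_def)
  also have "\<dots> = (1/2) ^ n * (basis_bound n / (1 + basis_bound n))"
    by (simp add: coeff_radius_def power_divide)
  also have "\<dots> \<le> (1/2) ^ n"
    using basis_bound_nonneg[of n] by (intro mult_left_le) auto
  finally show ?thesis .
qed

lemma coef_series_bound:
  "\<forall>\<^sub>F n in sequentially.
     \<forall>z\<in>cball 0 R. norm (coef A n * poly ((pderiv ^^ s) (basis_poly n)) z) \<le> (1/2) ^ n"
  unfolding eventually_sequentially
  by (intro exI[of _ "max s (nat \<lceil>R\<rceil>)"] allI impI ballI coef_term_bound) auto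

definition hermite_series :: "complex set \<Rightarrow> complex \<Rightarrow> complex" where
  "hermite_series A z = (\<Sum>n. coef A n * poly (basis_poly n) z)"

lemma higher_deriv_hermite_series:
  "(deriv ^^ s) (hermite_series A) = (\<lambda>z. \<Sum>n. coef A n * poly ((pderiv ^^ s) (basis_poly n)) z)"
  unfolding hermite_series_def[abs_def]
  by (rule higher_deriv_poly_series[OF coef_series_bound summable_geometric]) simp

lemma hermite_series_holomorphic: "hermite_series A holomorphic_on UNIV"
proof -
  have "\<exists>f'. (hermite_series A has_field_derivative f') (at z)" for z
    using poly_series_has_field_derivative[OF coef_series_bound summable_geometric, where s = 0 and z = z]
    unfolding hermite_series_def[abs_def] by auto
  then show ?thesis by (simp add: holomorphic_on_open)
qed

text \<open>Every prescribed value is attained: only the terms up to \<open>j\<close> contribute.\<close>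
lemma hermite_series_value:
  "(deriv ^^ deriv_order j) (hermite_series A) (node j) = partial_value j (coef A) + coef A j * lead_value j"
proof -
  have "(deriv ^^ deriv_order j) (hermite_series A) (node j) =
      (\<Sum>n<Suc j. coef A n * poly ((pderiv ^^ deriv_order j) (basis_poly n)) (node j))"
    unfolding higher_deriv_hermite_series by (rule suminf_finite) (auto simp: basis_poly_vanishes)
  then show ?thesis by (simp add: partial_value_def lead_value_def)
qed

lemma hermite_series_in_target:
  assumes "z \<in> alg_numbers"
  shows "(deriv ^^ s) (hermite_series A) z \<in> target A z"
proof -
  obtain j where "node j = z" "deriv_order j = s" using node_deriv_order_surj[OF assms] by blast
  then show ?thesis
    using hermite_series_value[of j A] coef_admissible[of A j] by (simp add: admissible_def)
qed

text \<open>No derivative of the series vanishes at \<open>0\<close>, so it is not a polynomial.\<close>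
lemma hermite_series_not_poly: "\<not> (\<exists>p. \<forall>z. hermite_series A z = poly p z)"
proof
  assume "\<exists>p. \<forall>z. hermite_series A z = poly p z"
  then obtain p where "hermite_series A = poly p" by blast
  then have "(deriv ^^ Suc (degree p)) (hermite_series A) 0 = 0"
    by (simp only: higher_deriv_poly higher_pderiv_beyond_degree) simp
  moreover have "(0::complex) \<in> alg_numbers" by (simp add: alg_numbers_def)
  ultimately show False
    using hermite_series_in_target zero_notin_target by metis
qed

theorem theorem2:
  assumes "A \<subseteq> alg_numbers"
  shows "\<exists>f. transcendental_entire f \<and>
           (\<forall>s::nat. exceptional_set ((deriv ^^ s) f) = A)"
proof (intro exI conjI allI)
  show "transcendental_entire (hermite_series A)"
    unfolding transcendental_entire_def
    using hermite_series_holomorphic hermite_series_not_poly by blast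
  show "exceptional_set ((deriv ^^ s) (hermite_series A)) = A" for s
  proof -
    have "algebraic ((deriv ^^ s) (hermite_series A) \<alpha>) \<longleftrightarrow> \<alpha> \<in> A" if "\<alpha> \<in> alg_numbers" for \<alpha>
      using target_algebraic_iff[OF hermite_series_in_target[OF that]] .
    then show ?thesis using assms unfolding exceptional_set_def alg_numbers_def by auto
  qed
qed

end
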